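(* Let $A_1,\dots,A_k$ be $2\times2$ real matrices with all entries strictly positive and norm $<1$, $d_i\in\mathbb R^2$, $T_i(x)=A_ix+d_i$, with $T_i(D)\subset D$ for all $i$ ($D$ the closed unit disc), and let $\mu$ be a Bernoulli measure on $\Sigma=\{1,\dots,k\}^{\mathbb N}$. Let $\lambda_{\max}=\max\{|j|_{\theta}: j\in\{1,\dots,k\},\ \theta\in\mathbb{PR}^1\}$. Then for all $\underline a\in\Sigma$, all $i,N\in\mathbb N$ and all $\theta\in\mathbb{PR}^1$, \[ H_{2^{-(i+1)N}}\big(\pi_\theta(\mu_{[a_1\cdots a_{n_i}]})\big)\ \ge\ H_{2^{\lambda_{\max}}2^{-N}}\big(\pi_{\phi_{a_{n_i}\cdots a_1}(\theta)}(\mu)\big), \] where $n_i=n_i(\underline a,N,\theta)$.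
   Context: Cylinders $[a_1\cdots a_n]\subset\Sigma$ are sets of sequences beginning with $a_1\cdots a_n$; a Bernoulli measure is a product measure $p^{\mathbb N}$, and $\mu_{[w]}=\mu|_{[w]}/\mu([w])$. For $w=a_1\cdots a_n$, $D_w=T_{a_1}\circ\cdots\circ T_{a_n}(D)$, and the coding map $\Pi:\Sigma\to D$ sends $\underline a$ to $\bigcap_nD_{a_1\cdots a_n}$. For $\theta\in\mathbb{PR}^1$ (lines through the origin), $\pi_\theta$ is orthogonal projection of $D$ onto the diameter of $D$ perpendicular to $\theta$, identified isometrically with $[-1,1]$; $\pi_\theta(\nu)$ denotes push-forward of a measure $\nu$ on $\Sigma$ under $\pi_\theta\circ\Pi$. For each $j$, $\phi_j:\mathbb{PR}^1\to\mathbb{PR}^1$ sends a line $\ell$ to $A_j^{-1}(\ell)$, and $\phi_{a_n\cdots a_1}=\phi_{a_n}\circ\cdots\circ\phi_{a_1}$. The length function is $|w|_\theta=-\log_2(|\pi_\theta(D_w)|/2)$. For $\underline a\in\Sigma$, $N,j\in\mathbb N$, $n_j=n_j(\underline a,N,\theta)$ is the natural number with $|a_1\cdots a_{n_j-1}|_\theta<Nj\le|a_1\cdots a_{n_j}|_\theta$. For a probability measure $\nu$ on $[-1,1]$ and $r>0$, $H_r(\nu)=-\int\log\nu(B_r(x))\,d\nu(x)$. *)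

theory Defs
  imports "HOL-Probability.Probability"
begin

(* Alphabet {1,...,k} is modelled by a finite type 'a; Sigma = nat => 'a, a_1 = a 0.
   A line theta through the origin (element of PR^1) is represented by any nonzero
   vector v :: real^2 spanning it. *)

definition unit_disc :: "(real^2) set" where
  "unit_disc = cball 0 1"

definition word :: "(nat \<Rightarrow> 'a) \<Rightarrow> nat \<Rightarrow> 'a list" where
  "word a n = map a [0..<n]"

definition cylinder :: "'a list \<Rightarrow> (nat \<Rightarrow> 'a) set" where
  "cylinder w = {b. \<forall>i<length w. b i = w ! i}"

definition Tmap :: "('a \<Rightarrow> real^2^2) \<Rightarrow> ('a \<Rightarrow> real^2) \<Rightarrow> 'a \<Rightarrow> real^2 \<Rightarrow> real^2" where
  "Tmap A d j x = A j *v x + d j"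

definition Dw :: "('a \<Rightarrow> real^2^2) \<Rightarrow> ('a \<Rightarrow> real^2) \<Rightarrow> 'a list \<Rightarrow> (real^2) set" where
  "Dw A d w = foldr (\<lambda>j S. Tmap A d j ` S) w unit_disc"

definition coding :: "('a \<Rightarrow> real^2^2) \<Rightarrow> ('a \<Rightarrow> real^2) \<Rightarrow> (nat \<Rightarrow> 'a) \<Rightarrow> real^2" where
  "coding A d a = (THE x. x \<in> (\<Inter>n. Dw A d (word a n)))"

definition perp_unit :: "real^2 \<Rightarrow> real^2" where
  "perp_unit v = (1 / norm v) *\<^sub>R vector [- (v $ 2), v $ 1]"

(* pi_theta: orthogonal projection onto the diameter perpendicular to theta = span v,
   identified isometrically with [-1,1] *)
definition proj :: "real^2 \<Rightarrow> real^2 \<Rightarrow> real" where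
  "proj v x = x \<bullet> perp_unit v"

definition wlen :: "('a \<Rightarrow> real^2^2) \<Rightarrow> ('a \<Rightarrow> real^2) \<Rightarrow> real^2 \<Rightarrow> 'a list \<Rightarrow> real" where
  "wlen A d v w = - log 2 (diameter (proj v ` Dw A d w) / 2)"

definition phi :: "('a \<Rightarrow> real^2^2) \<Rightarrow> 'a \<Rightarrow> real^2 \<Rightarrow> real^2" where
  "phi A j v = matrix_inv (A j) *v v"

(* phi_{a_n ... a_1} = phi_{a_n} o ... o phi_{a_1}, applied to word [a_1,...,a_n] *)
definition phiw :: "('a \<Rightarrow> real^2^2) \<Rightarrow> 'a list \<Rightarrow> real^2 \<Rightarrow> real^2" where
  "phiw A w v = fold (phi A) w v"

definition nidx :: "('a \<Rightarrow> real^2^2) \<Rightarrow> ('a \<Rightarrow> real^2) \<Rightarrow> (nat \<Rightarrow> 'a) \<Rightarrow> nat \<Rightarrow> real^2 \<Rightarrow> nat \<Rightarrow> nat" where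
  "nidx A d a N v j = (LEAST n. real (N * j) \<le> wlen A d v (word a n))"

definition Hr :: "real \<Rightarrow> real measure \<Rightarrow> real" where
  "Hr r \<nu> = - (\<integral>x. ln (measure \<nu> (ball x r)) \<partial>\<nu>)"

definition proj_meas :: "('a \<Rightarrow> real^2^2) \<Rightarrow> ('a \<Rightarrow> real^2) \<Rightarrow> real^2 \<Rightarrow> (nat \<Rightarrow> 'a) measure \<Rightarrow> real measure" where
  "proj_meas A d v \<nu> = distr \<nu> borel (\<lambda>a. proj v (coding A d a))"

definition bernoulli :: "'a pmf \<Rightarrow> (nat \<Rightarrow> 'a) measure" where
  "bernoulli p = PiM UNIV (\<lambda>_. measure_pmf p)"

definition lambda_max :: "('a \<Rightarrow> real^2^2) \<Rightarrow> ('a \<Rightarrow> real^2) \<Rightarrow> real" where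
  "lambda_max A d = Sup {wlen A d v [j] | j v. v \<noteq> 0}"

end

theory Submission
  imports Defs
begin

text \<open>
  Fixing the prefix w = a_1...a_n of a Bernoulli sequence, the conditional measure on the cylinder
  [w] is the image of the full measure under b \<mapsto> wb. Since coding(wb) = A_w coding(b) + d_w and
  the transpose of A_w maps the unit normal of \<theta> to a vector normal to \<phi>_w(\<theta>) of length
  2^(-|w|_\<theta>), the projection of the conditional measure onto \<theta>^\<bottom> is an affine image,
  with slope of modulus 2^(-|w|_\<theta>), of the projection of the full measure onto \<phi>_w(\<theta>)^\<bottom>.
  Rescaling by \<kappa> turns H_r into H_(r/|\<kappa>|), and H_r decreases in r. Appending one letter
  increases |.|_\<theta> by at most \<lambda>_max, so by minimality of n_i we get |a_1...a_(n_i)|_\<theta> < Ni + \<lambda>_max,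
  which bounds the rescaled radius by 2^\<lambda>_max 2^(-N).
\<close>

declare transpose_matrix_vector[simp del]

section \<open>Words as affine maps\<close>

definition Aw :: "('a \<Rightarrow> real^2^2) \<Rightarrow> 'a list \<Rightarrow> real^2^2" where
  "Aw A w = foldr (\<lambda>j M. A j ** M) w (mat 1)"

definition dw :: "('a \<Rightarrow> real^2^2) \<Rightarrow> ('a \<Rightarrow> real^2) \<Rightarrow> 'a list \<Rightarrow> real^2" where
  "dw A d w = foldr (\<lambda>j c. A j *v c + d j) w 0"

lemma Aw_simps [simp]: "Aw A [] = mat 1" "Aw A (j # w) = A j ** Aw A w"
  by (simp_all add: Aw_def)

lemma dw_simps [simp]: "dw A d [] = 0" "dw A d (j # w) = A j *v dw A d w + d j"
  by (simp_all add: dw_def)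

lemma Aw_append: "Aw A (xs @ ys) = Aw A xs ** Aw A ys"
  by (induction xs) (simp_all add: matrix_mul_assoc)

lemma foldr_Tmap_image:
  "foldr (\<lambda>j S. Tmap A d j ` S) w S = (\<lambda>x. Aw A w *v x + dw A d w) ` S"
proof (induction w)
  case (Cons j w)
  then show ?case
    by (simp add: image_image Tmap_def matrix_vector_right_distrib matrix_vector_mul_assoc add.assoc)
qed simp

lemma Dw_eq_image: "Dw A d w = (\<lambda>x. Aw A w *v x + dw A d w) ` unit_disc"
  by (simp add: Dw_def foldr_Tmap_image)

lemma Dw_append: "Dw A d (xs @ ys) = (\<lambda>x. Aw A xs *v x + dw A d xs) ` Dw A d ys"
  unfolding Dw_def foldr_append o_apply by (rule foldr_Tmap_image)

lemma matrix_vector_mult_inner_transpose: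
  fixes M :: "real^2^2"
  shows "(M *v x) \<bullet> y = x \<bullet> (transpose M *v y)"
  by (simp add: inner_vec_def matrix_vector_mult_def transpose_def sum_2 algebra_simps)

lemma matrix_mul_matrix_inv: "invertible M \<Longrightarrow> M ** matrix_inv M = mat 1"
  by (metis (mono_tags, lifting) invertible_def matrix_inv_def someI_ex)

lemma Aw_phiw:
  assumes "\<And>j. invertible (A j)"
  shows "Aw A w *v phiw A w v = v"
proof (induction w arbitrary: v)
  case (Cons j w)
  have "Aw A (j # w) *v phiw A (j # w) v = A j *v (Aw A w *v phiw A w (phi A j v))"
    by (simp add: phiw_def matrix_vector_mul_assoc)
  also have "\<dots> = v"
    using Cons by (simp add: phi_def matrix_vector_mul_assoc matrix_mul_matrix_inv assms)
  finally show ?case .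
qed (simp add: phiw_def)

lemma norm_vec2: "norm (x::real^2) = sqrt ((x$1)^2 + (x$2)^2)"
  by (simp add: norm_vec_def L2_set_def sum_2)

lemma inner_vec2: "(x::real^2) \<bullet> y = x$1 * y$1 + x$2 * y$2"
  by (simp add: inner_vec_def sum_2)

lemma perp_unit_nth: "perp_unit v $ 1 = - (v$2) / norm v" "perp_unit v $ 2 = v$1 / norm v"
  by (simp_all add: perp_unit_def)

lemma norm_perp_unit:
  assumes "v \<noteq> 0"
  shows "norm (perp_unit v) = 1"
proof -
  have "norm (perp_unit v) = sqrt (((v$2)^2 + (v$1)^2) / (norm v)^2)"
    by (simp add: norm_vec2 perp_unit_nth power_divide add_divide_distrib)
  also have "(v$2)^2 + (v$1)^2 = (norm v)^2" by (simp add: norm_vec2)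
  finally show ?thesis using assms by simp
qed

lemma inner_perp_unit_self: "perp_unit v \<bullet> v = 0"
  by (simp add: inner_vec2 perp_unit_nth field_simps)

lemma orthogonal_perp_unit_eq:
  fixes y z :: "real^2"
  assumes "z \<noteq> 0" "y \<bullet> z = 0"
  shows "y = (y \<bullet> perp_unit z) *\<^sub>R perp_unit z"
proof -
  have n: "(norm z)^2 = (z$1)^2 + (z$2)^2" by (simp add: norm_vec2)
  have nz: "norm z \<noteq> 0" using assms by simp
  have "y$1 * z$1 + y$2 * z$2 = 0" using assms(2) by (simp add: inner_vec2)
  then have "y$1 * (norm z)^2 = (y$1 * z$2 - y$2 * z$1) * z$2"
       "y$2 * (norm z)^2 = (y$2 * z$1 - y$1 * z$2) * z$1"
    unfolding n by algebra+
  then show ?thesis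
    using nz by (simp add: vec_eq_iff forall_2 inner_vec2 perp_unit_nth field_simps power2_eq_square)
      (metis distrib_left)
qed

lemma image_inner_cball:
  fixes z :: "'b::real_inner"
  shows "(\<lambda>x. x \<bullet> z + c) ` cball 0 1 = {c - norm z .. c + norm z}"
proof
  show "(\<lambda>x. x \<bullet> z + c) ` cball 0 1 \<subseteq> {c - norm z .. c + norm z}"
  proof clarify
    fix x :: 'b assume "x \<in> cball 0 1"
    then have "\<bar>x \<bullet> z\<bar> \<le> norm z"
      using Cauchy_Schwarz_ineq2[of x z] by (simp add: mult_left_le_one_le order_trans)
    then show "x \<bullet> z + c \<in> {c - norm z .. c + norm z}" by auto
  qed
  show "{c - norm z .. c + norm z} \<subseteq> (\<lambda>x. x \<bullet> z + c) ` cball 0 1"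
  proof
    fix t assume t: "t \<in> {c - norm z .. c + norm z}"
    show "t \<in> (\<lambda>x. x \<bullet> z + c) ` cball 0 1"
    proof (cases "z = 0")
      case True
      then show ?thesis using t by (intro image_eqI[of _ _ 0]) auto
    next
      case False
      define x where "x = ((t - c) / (norm z)^2) *\<^sub>R z"
      have "norm x = \<bar>t - c\<bar> / norm z" using False by (simp add: x_def power2_eq_square)
      then have "x \<in> cball 0 1" using t False by (simp add: divide_le_eq_1 abs_le_iff)
      moreover have "t = x \<bullet> z + c" using False by (simp add: x_def power2_norm_eq_inner[symmetric])
      ultimately show ?thesis by blast
    qed
  qed
qed

lemma diameter_proj_Dw:
  "diameter (proj v ` Dw A d w) = 2 * norm (transpose (Aw A w) *v perp_unit v)"
proof -
  have "proj v ` Dw A d w =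
      (\<lambda>x. x \<bullet> (transpose (Aw A w) *v perp_unit v) + dw A d w \<bullet> perp_unit v) ` cball 0 1"
    by (simp add: Dw_eq_image image_image proj_def inner_add_left
        matrix_vector_mult_inner_transpose unit_disc_def)
  then show ?thesis by (simp add: image_inner_cball diameter_closed_interval)
qed

lemma wlen_eq: "wlen A d v w = - log 2 (norm (transpose (Aw A w) *v perp_unit v))"
  by (simp add: wlen_def diameter_proj_Dw)

lemma norm_phiw_mult_transpose_Aw_ge_1:
  assumes "\<And>j. invertible (A j)" and "norm u = 1"
  shows "1 \<le> norm (phiw A w u) * norm (transpose (Aw A w) *v u)"
proof -
  have "1 = (Aw A w *v phiw A w u) \<bullet> u"
    using assms by (simp add: Aw_phiw power2_norm_eq_inner[symmetric])
  also have "\<dots> \<le> norm (phiw A w u) * norm (transpose (Aw A w) *v u)"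
    unfolding matrix_vector_mult_inner_transpose by (rule norm_cauchy_schwarz)
  finally show ?thesis .
qed

lemma transpose_Aw_nonzero:
  assumes "\<And>j. invertible (A j)" and "norm u = 1"
  shows "transpose (Aw A w) *v u \<noteq> 0"
  using norm_phiw_mult_transpose_Aw_ge_1[where A=A and w=w, OF assms] by auto

lemma bdd_above_wlen_letters:
  fixes A :: "'a::finite \<Rightarrow> real^2^2"
  assumes inv: "\<And>j. invertible (A j)"
  shows "bdd_above {wlen A d v [j] | j v. v \<noteq> 0}"
proof -
  define K where "K j = onorm ((*v) (matrix_inv (A j)))" for j
  have "wlen A d v [j] \<le> Max (range (\<lambda>j. log 2 (K j)))" if "v \<noteq> 0" for v j
  proof -
    let ?u = "perp_unit v" and ?y = "transpose (Aw A [j]) *v perp_unit v"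
    have u: "norm ?u = 1" using that by (rule norm_perp_unit)
    have "norm (phiw A [j] ?u) \<le> K j"
      using onorm[OF matrix_vector_mul_bounded_linear, of "matrix_inv (A j)" ?u] u
      by (simp add: phiw_def phi_def K_def)
    then have "1 \<le> K j * norm ?y"
      using norm_phiw_mult_transpose_Aw_ge_1[OF inv u, where w="[j]"]
      by (meson mult_right_mono norm_ge_zero order_trans)
    moreover have y0: "norm ?y > 0" using transpose_Aw_nonzero[where A=A and w="[j]", OF inv u] by simp
    ultimately have "1 / norm ?y \<le> K j" by (simp add: divide_le_eq)
    then have "log 2 (1 / norm ?y) \<le> log 2 (K j)"
      using y0 by (intro log_mono) auto
    then have "wlen A d v [j] \<le> log 2 (K j)"
      using y0 by (simp add: wlen_eq log_divide)
    also have "\<dots> \<le> Max (range (\<lambda>j. log 2 (K j)))" by simp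
    finally show ?thesis .
  qed
  then show ?thesis unfolding bdd_above_def by blast
qed

lemma wlen_snoc_le:
  fixes A :: "'a::finite \<Rightarrow> real^2^2"
  assumes inv: "\<And>j. invertible (A j)" and "v \<noteq> 0"
  shows "wlen A d v (w @ [j]) \<le> wlen A d v w + lambda_max A d"
proof -
  define s where "s = transpose (Aw A w) *v perp_unit v"
  have s0: "s \<noteq> 0"
    unfolding s_def using transpose_Aw_nonzero[OF inv norm_perp_unit] assms(2) .
  define t where "t = (1 / norm s) *\<^sub>R s"
  have nt: "norm t = 1" using s0 by (simp add: t_def)
  \<comment> \<open>the line whose unit normal is \<open>t\<close>; then \<open>|wj|\<^sub>v = |w|\<^sub>v + |j|\<^sub>v\<^sub>'\<close>\<close>
  define v' where "v' = (vector [t$2, - (t$1)] :: real^2)"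
  have nv': "norm v' = 1" using nt by (simp add: v'_def norm_vec2 add.commute)
  have "perp_unit v' = t"
    using nv' by (simp add: vec_eq_iff forall_2 perp_unit_nth v'_def)
  then have "wlen A d v' [j] = - log 2 (norm (transpose (A j) *v t))"
    by (simp add: wlen_eq matrix_mul_rid)
  moreover have "transpose (A j) *v t \<noteq> 0"
    using transpose_Aw_nonzero[OF inv nt, where w="[j]"] by (simp add: matrix_mul_rid)
  moreover have "transpose (Aw A (w @ [j])) *v perp_unit v = norm s *\<^sub>R (transpose (A j) *v t)"
    using s0 by (simp add: s_def t_def Aw_append matrix_transpose_mul matrix_vector_mul_assoc
        matrix_mul_rid matrix_vector_mult_scaleR)
  ultimately have "wlen A d v (w @ [j]) = wlen A d v w + wlen A d v' [j]"
    using s0 by (simp add: wlen_eq s_def log_mult)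
  moreover have "wlen A d v' [j] \<le> lambda_max A d"
    unfolding lambda_max_def using nv' by (intro cSup_upper bdd_above_wlen_letters inv) force+
  ultimately show ?thesis by simp
qed

section \<open>The coding map\<close>

lemma word_add: "word a (n + m) = word a n @ map a [n..<n+m]"
  unfolding word_def by (subst upt_add_eq_append) simp_all

lemma length_word [simp]: "length (word a n) = n"
  by (simp add: word_def)

lemma word_comb_seq: "word (comb_seq n a b) (n + k) = word a n @ word b k"
proof -
  have "map (comb_seq n a b) [0..<n] = map a [0..<n]"
    by (rule map_cong) (auto simp: comb_seq_less)
  moreover have "map (comb_seq n a b) [n..<n+k] = map b [0..<k]"
    by (simp add: map_add_upt[symmetric] add.commute comb_seq_add)
  ultimately show ?thesis unfolding word_add by (simp only: word_def)
qed

locale contracting_IFS =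
  fixes A :: "'a::finite \<Rightarrow> real^2^2" and d :: "'a \<Rightarrow> real^2"
  assumes contr: "\<And>j. onorm (\<lambda>x. A j *v x) < 1"
    and inv: "\<And>j. invertible (A j)"
    and inv_disc: "\<And>j. Tmap A d j ` unit_disc \<subseteq> unit_disc"
begin

definition q :: real where "q = Max (range (\<lambda>j. onorm (\<lambda>x. A j *v x)))"

lemma onorm_le_q: "onorm (\<lambda>x. A j *v x) \<le> q"
  unfolding q_def by (rule Max_ge) auto

lemma q_less_1: "q < 1"
  using Max_in[of "range (\<lambda>j. onorm (\<lambda>x. A j *v x))"] contr by (auto simp: q_def)

lemma q_nonneg: "0 \<le> q"
  using onorm_le_q[of undefined] onorm_pos_le[OF matrix_vector_mul_bounded_linear, of "A undefined"]
  by (simp add: eta_contract_eq)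

lemma q_power_tendsto_0: "(\<lambda>n. q ^ n) \<longlonglongrightarrow> 0"
  using q_less_1 q_nonneg by (intro LIMSEQ_power_zero) simp

lemma norm_Aw_le: "norm (Aw A w *v x) \<le> q ^ length w * norm x"
proof (induction w arbitrary: x)
  case (Cons j w)
  have "norm (Aw A (j # w) *v x) \<le> onorm (\<lambda>x. A j *v x) * norm (Aw A w *v x)"
    using onorm[OF matrix_vector_mul_bounded_linear, of "A j" "Aw A w *v x"]
    by (simp add: matrix_vector_mul_assoc[symmetric] eta_contract_eq)
  also have "\<dots> \<le> q * (q ^ length w * norm x)"
    by (intro mult_mono onorm_le_q Cons q_nonneg) auto
  finally show ?case by simp
qed simp

lemma norm_transpose_Aw_le:
  assumes "norm u = 1"
  shows "norm (transpose (Aw A w) *v u) \<le> q ^ length w"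
proof -
  let ?y = "transpose (Aw A w) *v u"
  have "norm ?y * norm ?y = (Aw A w *v ?y) \<bullet> u"
    by (simp add: matrix_vector_mult_inner_transpose power2_eq_square flip: power2_norm_eq_inner)
  also have "\<dots> \<le> q ^ length w * norm ?y"
    using norm_cauchy_schwarz[of "Aw A w *v ?y" u] norm_Aw_le[of w ?y] assms by simp
  finally show ?thesis
    using q_nonneg by (cases "?y = 0") simp_all
qed

lemma Dw_subset_disc: "Dw A d w \<subseteq> unit_disc"
proof (induction w)
  case (Cons j w)
  then have "Tmap A d j ` Dw A d w \<subseteq> unit_disc" using inv_disc by blast
  then show ?case by (simp add: Dw_def)
qed (simp add: Dw_def)

lemma Dw_word_antimono: "m \<le> n \<Longrightarrow> Dw A d (word a n) \<subseteq> Dw A d (word a m)"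
  using word_add[of a m "n - m"] Dw_subset_disc
  by (fastforce simp: Dw_append Dw_eq_image[of A d "word a m"])

lemma compact_Dw: "compact (Dw A d w)"
  unfolding Dw_eq_image unit_disc_def
  by (intro compact_continuous_image compact_cball continuous_intros
      bounded_linear.continuous_on[OF matrix_vector_mul_bounded_linear])

lemma dw_in_Dw: "dw A d w \<in> Dw A d w"
  unfolding Dw_eq_image unit_disc_def by (rule image_eqI[of _ _ 0]) simp_all

lemma dist_in_Dw_le: "x \<in> Dw A d w \<Longrightarrow> y \<in> Dw A d w \<Longrightarrow> dist x y \<le> 2 * q ^ length w"
proof -
  assume "x \<in> Dw A d w" "y \<in> Dw A d w"
  then obtain x' y' where x': "norm x' \<le> 1" "x = Aw A w *v x' + dw A d w"
    and y': "norm y' \<le> 1" "y = Aw A w *v y' + dw A d w"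
    by (auto simp: Dw_eq_image unit_disc_def)
  have "dist x y \<le> q ^ length w * norm (x' - y')"
    using norm_Aw_le[of w "x' - y'"] by (simp add: x' y' dist_norm matrix_vector_mult_diff_distrib)
  also have "\<dots> \<le> q ^ length w * 2"
    using norm_triangle_ineq4[of x' y'] x' y' by (intro mult_left_mono q_nonneg zero_le_power) simp_all
  finally show ?thesis by simp
qed

lemma Inter_Dw_word_singleton: "\<exists>c. (\<Inter>n. Dw A d (word a n)) = {c}"
proof (rule decreasing_closed_nest_sing)
  fix e :: real assume "e > 0"
  then obtain n where "2 * q ^ n < e"
    using order_tendstoD(2)[OF tendsto_mult_right_zero[OF q_power_tendsto_0, of 2] \<open>e > 0\<close>]
    by (auto simp: eventually_sequentially)
  then show "\<exists>n. \<forall>x\<in>Dw A d (word a n). \<forall>y\<in>Dw A d (word a n). dist x y < e"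
    using dist_in_Dw_le[of _ "word a n"] by fastforce
qed (use compact_Dw compact_imp_closed dw_in_Dw Dw_word_antimono in blast)+

lemma coding_iff: "x = coding A d a \<longleftrightarrow> (\<forall>n. x \<in> Dw A d (word a n))"
proof -
  obtain c where c: "(\<Inter>n. Dw A d (word a n)) = {c}" using Inter_Dw_word_singleton by blast
  then have "coding A d a = c" by (simp add: coding_def)
  then show ?thesis using c by blast
qed

lemma coding_in_Dw: "coding A d a \<in> Dw A d (word a n)"
  using coding_iff by blast

lemma coding_in_disc: "coding A d a \<in> unit_disc"
  using coding_in_Dw Dw_subset_disc by blast

lemma coding_comb_seq:
  "coding A d (comb_seq n a b) = Aw A (word a n) *v coding A d b + dw A d (word a n)"
proof (subst eq_commute, subst coding_iff, intro allI)
  fix m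
  let ?y = "Aw A (word a n) *v coding A d b + dw A d (word a n)"
  have *: "?y \<in> Dw A d (word (comb_seq n a b) (n + k))" for k
    unfolding word_comb_seq Dw_append using coding_in_Dw[of b k] by blast
  show "?y \<in> Dw A d (word (comb_seq n a b) m)"
  proof (cases "m \<le> n")
    case True
    then show ?thesis using *[of 0] Dw_word_antimono[OF True, of "comb_seq n a b"] by auto
  next
    case False
    then show ?thesis using *[of "m - n"] by simp
  qed
qed

end

lemma space_bernoulli [simp]: "space (bernoulli p) = UNIV"
  by (simp add: bernoulli_def space_PiM)

lemma prob_space_bernoulli: "prob_space (bernoulli p)"
  unfolding bernoulli_def
  by (intro prob_space_PiM prob_space_measure_pmf)

lemma cylinder_word: "cylinder (word a n) = {b. \<forall>i<n. b i = a i}"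
  by (simp add: cylinder_def word_def)

lemma sets_bernoulli_prefix: "{x. \<forall>i<n. x i = l i} \<in> sets (bernoulli p)"
proof -
  have "{x \<in> space (bernoulli p). \<forall>i<n. x i = l i} \<in> sets (bernoulli p)"
    unfolding bernoulli_def by measurable
  then show ?thesis by simp
qed

lemma word_measurable:
  fixes p :: "'a::countable pmf"
  shows "(\<lambda>x. word x n) \<in> measurable (bernoulli p) (count_space UNIV)"
proof (subst measurable_count_space_eq2_countable, intro conjI ballI)
  fix l :: "'a list"
  have "word x n = l \<longleftrightarrow> length l = n \<and> (\<forall>i<n. x i = l ! i)" for x
    unfolding word_def list_eq_iff_nth_eq by auto
  then have "(\<lambda>x. word x n) -` {l} \<inter> space (bernoulli p) =
        (if length l = n then {x. \<forall>i<n. x i = l ! i} else {})"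
    by auto
  then show "(\<lambda>x. word x n) -` {l} \<inter> space (bernoulli p) \<in> sets (bernoulli p)"
    using sets_bernoulli_prefix[of n "\<lambda>i. l ! i" p] by simp
qed simp

lemma comb_seq_measurable_bernoulli:
  "comb_seq n a \<in> measurable (bernoulli p) (bernoulli p)"
  unfolding bernoulli_def
  by (rule measurable_comb_seq'[OF measurable_const measurable_ident_sets[OF refl]])
    (simp add: space_PiM)

context sequence_space
begin

lemma uniform_measure_prefix_eq_distr_comb_seq:
  assumes C_def: "C = {b. \<forall>i<n. b i = a i}"
    and C_sets: "C \<in> sets S" and C_pos: "emeasure S C \<noteq> 0"
    and a: "a \<in> space S"
  shows "uniform_measure S C = distr S S (comb_seq n a)"
proof (rule measure_eqI)
  show "sets (uniform_measure S C) = sets (distr S S (comb_seq n a))" by simp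
  have comb_meas: "comb_seq n a \<in> measurable S S"
    using a by measurable
  fix X assume "X \<in> sets (uniform_measure S C)"
  then have X: "X \<in> sets S" by simp
  let ?Y = "comb_seq n a -` X \<inter> space S"
  have Y: "?Y \<in> sets S" using comb_meas X by measurable
  have "(\<lambda>(\<omega>, \<omega>'). comb_seq n \<omega> \<omega>') -` (C \<inter> X) \<inter> space (S \<Otimes>\<^sub>M S) = C \<times> ?Y"
  proof -
    have freeze: "\<omega> \<in> C \<Longrightarrow> comb_seq n \<omega> \<omega>' = comb_seq n a \<omega>'" for \<omega> \<omega>'
      by (auto simp: C_def comb_seq_def)
    have prefix: "comb_seq n \<omega> \<omega>' \<in> C \<longleftrightarrow> \<omega> \<in> C" for \<omega> \<omega>'
      by (auto simp: C_def comb_seq_less)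
    have "C \<subseteq> space S" using C_sets by (rule sets.sets_into_space)
    have "a \<in> C" by (simp add: C_def)
    show ?thesis
    proof (rule set_eqI, simp only: split_paired_all)
      fix \<omega> \<omega>' :: "nat \<Rightarrow> 'a"
      show "(\<omega>, \<omega>') \<in> (\<lambda>(\<omega>, \<omega>'). comb_seq n \<omega> \<omega>') -` (C \<inter> X) \<inter> space (S \<Otimes>\<^sub>M S) \<longleftrightarrow>
          (\<omega>, \<omega>') \<in> C \<times> ?Y"
        using \<open>C \<subseteq> space S\<close> \<open>a \<in> C\<close> freeze[of \<omega> \<omega>']
        by (cases "\<omega> \<in> C") (auto simp: space_pair_measure prefix)
    qed
  qed
  then have preimage: "(\<lambda>(\<omega>, \<omega>'). comb_seq n \<omega> \<omega>') -` (C \<inter> X) \<inter> space (S \<Otimes>\<^sub>M S) = C \<times> ?Y" .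
  have "emeasure S (C \<inter> X) =
      emeasure (distr (S \<Otimes>\<^sub>M S) S (\<lambda>(\<omega>, \<omega>'). comb_seq n \<omega> \<omega>')) (C \<inter> X)"
    by (simp only: PiM_comb_seq)
  also have "\<dots> = emeasure (S \<Otimes>\<^sub>M S) (C \<times> ?Y)"
    unfolding preimage[symmetric] using C_sets X by (intro emeasure_distr measurable_comb_seq) auto
  also have "\<dots> = emeasure S ?Y * emeasure S C"
    using C_sets Y by (simp add: P.emeasure_pair_measure_Times mult.commute)
  finally have "emeasure S (C \<inter> X) / emeasure S C = emeasure S ?Y"
    using ennreal_mult_divide_eq[OF C_pos P.emeasure_finite] by simp
  then show "emeasure (uniform_measure S C) X = emeasure (distr S S (comb_seq n a)) X"
    using emeasure_uniform_measure[OF C_sets X] emeasure_distr[OF comb_meas X] by simp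
qed

end

lemma sequence_space_measure_pmf: "sequence_space (measure_pmf p)"
  unfolding sequence_space_def product_prob_space_def product_prob_space_axioms_def
    product_sigma_finite_def
  by (simp add: prob_space_measure_pmf prob_space_imp_sigma_finite)

lemma uniform_measure_cylinder:
  assumes supp: "set_pmf p = UNIV"
  shows "uniform_measure (bernoulli p) (cylinder (word a n)) =
         distr (bernoulli p) (bernoulli p) (comb_seq n a)"
proof -
  interpret sequence_space "measure_pmf p" by (rule sequence_space_measure_pmf)
  have B: "bernoulli p = S" by (simp add: bernoulli_def)
  let ?C = "{b. \<forall>i<n. b i = a i}"
  have "?C = prod_emb UNIV (\<lambda>i. measure_pmf p) {..<n} (\<Pi>\<^sub>E i\<in>{..<n}. {a i})"
    unfolding prod_emb_def set_eq_iff PiE_iff by auto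
  then have "emeasure S ?C = (\<Prod>i<n. ennreal (pmf p (a i)))"
    by (simp add: emeasure_PiM_emb emeasure_pmf_single)
  moreover have "pmf p (a i) \<noteq> 0" for i
    using supp by (simp add: set_pmf_iff[symmetric])
  ultimately have "emeasure S ?C \<noteq> 0" by simp
  then show ?thesis
    unfolding B cylinder_word using sets_bernoulli_prefix[of n a p]
    by (intro uniform_measure_prefix_eq_distr_comb_seq) (simp_all add: B space_PiM)
qed

context contracting_IFS
begin

lemma coding_measurable: "coding A d \<in> borel_measurable (bernoulli p)"
proof (rule borel_measurable_LIMSEQ_metric)
  show "(\<lambda>x. dw A d (word x n)) \<in> borel_measurable (bernoulli p)" for n
    by (rule measurable_compose[OF word_measurable]) simp
  fix x :: "nat \<Rightarrow> 'a"
  have "dist (dw A d (word x n)) (coding A d x) \<le> 2 * q ^ n" for n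
    using dist_in_Dw_le[OF dw_in_Dw coding_in_Dw] by simp
  then have "(\<lambda>n. dist (dw A d (word x n)) (coding A d x)) \<longlonglongrightarrow> 0"
    by (intro Lim_null_comparison[OF always_eventually tendsto_mult_right_zero[OF q_power_tendsto_0]])
      auto
  then show "(\<lambda>n. dw A d (word x n)) \<longlonglongrightarrow> coding A d x"
    using tendsto_dist_iff by blast
qed

lemma proj_coding_measurable:
  "(\<lambda>x. proj v (coding A d x)) \<in> borel_measurable (bernoulli p)"
  unfolding proj_def by (intro borel_measurable_inner coding_measurable) simp

lemma prob_space_proj_meas: "prob_space (proj_meas A d v (bernoulli p))"
  unfolding proj_meas_def
  by (intro prob_space.prob_space_distr prob_space_bernoulli proj_coding_measurable)

lemma sets_proj_meas [measurable_cong]: "sets (proj_meas A d v \<nu>) = sets borel"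
  by (simp add: proj_meas_def)

lemma AE_proj_meas_interval:
  assumes "v \<noteq> 0"
  shows "AE x in proj_meas A d v (bernoulli p). x \<in> {-1..1}"
proof -
  have "\<bar>proj v (coding A d b)\<bar> \<le> 1" for b
    using Cauchy_Schwarz_ineq2[of "coding A d b" "perp_unit v"] coding_in_disc[of b]
      norm_perp_unit[OF assms]
    by (simp add: proj_def unit_disc_def)
  then show ?thesis
    unfolding proj_meas_def by (subst AE_distr_iff[OF proj_coding_measurable]) (auto simp: abs_le_iff)
qed

lemma proj_meas_cylinder:
  assumes supp: "set_pmf p = UNIV" and v: "v \<noteq> 0"
  obtains \<kappa> c where "\<bar>\<kappa>\<bar> = 2 powr (- wlen A d v (word a n))"
    and "proj_meas A d v (uniform_measure (bernoulli p) (cylinder (word a n))) =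
         distr (proj_meas A d (phiw A (word a n) v) (bernoulli p)) borel (\<lambda>t. \<kappa> * t + c)"
proof -
  define w where "w = word a n"
  define z where "z = phiw A w v"
  define y where "y = transpose (Aw A w) *v perp_unit v"
  have Az: "Aw A w *v z = v" unfolding z_def by (rule Aw_phiw[OF inv])
  have z0: "z \<noteq> 0" using Az v by auto
  have y0: "y \<noteq> 0" unfolding y_def by (rule transpose_Aw_nonzero[OF inv norm_perp_unit[OF v]])
  have "y \<bullet> z = (Aw A w *v z) \<bullet> perp_unit v"
    unfolding y_def by (simp only: inner_commute[of _ z] matrix_vector_mult_inner_transpose)
  also have "\<dots> = 0"
    using inner_perp_unit_self[of v] by (simp add: Az inner_commute)
  finally have "y \<bullet> z = 0" .
  then have yk: "y = (y \<bullet> perp_unit z) *\<^sub>R perp_unit z"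
    using z0 by (rule orthogonal_perp_unit_eq[rotated])
  define \<kappa> where "\<kappa> = y \<bullet> perp_unit z"
  define c where "c = dw A d w \<bullet> perp_unit v"
  have "\<bar>\<kappa>\<bar> = norm y"
    using norm_perp_unit[OF z0] by (subst yk) (simp add: \<kappa>_def)
  also have "\<dots> = 2 powr (- wlen A d v w)"
    using y0 by (simp add: wlen_eq y_def)
  finally have \<kappa>: "\<bar>\<kappa>\<bar> = 2 powr (- wlen A d v w)" .
  have factor: "proj v (coding A d (comb_seq n a b)) = \<kappa> * proj z (coding A d b) + c" for b
  proof -
    have "proj v (coding A d (comb_seq n a b)) = coding A d b \<bullet> y + c"
      by (simp only: coding_comb_seq proj_def inner_add_left matrix_vector_mult_inner_transpose
          y_def c_def w_def)
    also have "\<dots> = \<kappa> * proj z (coding A d b) + c"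
      by (subst yk) (simp add: proj_def \<kappa>_def)
    finally show ?thesis .
  qed
  have "proj_meas A d v (uniform_measure (bernoulli p) (cylinder w)) =
      distr (bernoulli p) borel (\<lambda>b. proj v (coding A d (comb_seq n a b)))"
    unfolding proj_meas_def w_def uniform_measure_cylinder[OF supp]
    by (subst distr_distr[OF proj_coding_measurable comb_seq_measurable_bernoulli]) (simp add: o_def)
  also have "\<dots> = distr (proj_meas A d z (bernoulli p)) borel (\<lambda>t. \<kappa> * t + c)"
    unfolding factor proj_meas_def
    by (subst distr_distr[OF _ proj_coding_measurable]) (simp_all add: o_def)
  finally show ?thesis
    using that \<kappa> unfolding w_def z_def by blast
qed

end

section \<open>The entropy functional \<open>H\<^sub>r\<close>\<close>

lemma measure_ball_borel_measurable:
  fixes \<nu> :: "real measure"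
  assumes "finite_measure \<nu>" and S: "sets \<nu> = sets borel"
  shows "(\<lambda>x. measure \<nu> (ball x r)) \<in> borel_measurable borel"
proof -
  interpret finite_measure \<nu> by fact
  let ?Q = "{z::real \<times> real. dist (fst z) (snd z) < r}"
  have "open ?Q"
    by (intro open_Collect_less continuous_intros)
  then have "?Q \<in> sets (borel \<Otimes>\<^sub>M \<nu>)"
    unfolding sets_pair_measure_cong[OF refl S] borel_prod by simp
  from measurable_emeasure_Pair[OF this]
  have "(\<lambda>x. emeasure \<nu> (ball x r)) \<in> borel_measurable borel"
    by (simp add: ball_def vimage_def)
  then show ?thesis
    unfolding measure_def by (rule borel_measurable_enn2real)
qed

lemma Hr_affine_image:
  fixes \<nu> :: "real measure"
  assumes "prob_space \<nu>" and S: "sets \<nu> = sets borel" and "\<kappa> \<noteq> 0"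
  shows "Hr r (distr \<nu> borel (\<lambda>y. \<kappa> * y + c)) = Hr (r / \<bar>\<kappa>\<bar>) \<nu>"
proof -
  let ?h = "\<lambda>y. \<kappa> * y + c"
  let ?D = "distr \<nu> borel ?h"
  have sp: "space \<nu> = UNIV" using sets_eq_imp_space_eq[OF S] by simp
  have hm: "?h \<in> borel_measurable \<nu>" by (simp add: measurable_cong_sets[OF S refl])
  have "finite_measure ?D"
    using assms(1) hm by (intro prob_space.finite_measure prob_space.prob_space_distr) auto
  then have gm: "(\<lambda>x. ln (measure ?D (ball x r))) \<in> borel_measurable borel"
    using measure_ball_borel_measurable[of ?D] by measurable
  have "dist (?h y) (?h z) < r \<longleftrightarrow> dist y z < r / \<bar>\<kappa>\<bar>" for y z
    using assms(3)
    by (simp add: dist_real_def pos_less_divide_eq mult.commute flip: abs_mult right_diff_distrib)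
  then have "?h -` ball (?h y) r \<inter> space \<nu> = ball y (r / \<bar>\<kappa>\<bar>)" for y
    by (auto simp: sp ball_def)
  then have "measure ?D (ball (?h y) r) = measure \<nu> (ball y (r / \<bar>\<kappa>\<bar>))" for y
    by (simp add: measure_distr[OF hm])
  then show ?thesis
    by (simp add: Hr_def integral_distr[OF hm gm])
qed

text \<open>
  Balls of radius \<open>r\<close> contain a whole cell \<open>[kr, (k+1)r)\<close>, and only finitely many cells meet
  \<open>[-1,1]\<close>; the cells of measure zero form a null set.
\<close>

lemma AE_measure_ball_ge:
  fixes \<nu> :: "real measure"
  assumes "prob_space \<nu>" and S: "sets \<nu> = sets borel"
    and bnd: "AE x in \<nu>. x \<in> {-1..1}" and r: "r > 0"
  obtains \<epsilon> where "\<epsilon> > 0" and "AE x in \<nu>. \<epsilon> \<le> measure \<nu> (ball x r)"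
proof -
  interpret prob_space \<nu> by fact
  define I where "I k = {real_of_int k * r ..< (real_of_int k + 1) * r}" for k :: int
  define g where "g x = \<lfloor>x / r\<rfloor>" for x :: real
  have I_sets: "I k \<in> sets \<nu>" for k unfolding I_def S by simp
  have g_mem: "x \<in> I (g x)" for x
  proof -
    have "real_of_int \<lfloor>x / r\<rfloor> \<le> x / r" "x / r < real_of_int \<lfloor>x / r\<rfloor> + 1"
      by linarith+
    then have "real_of_int \<lfloor>x / r\<rfloor> * r \<le> x" "x < (real_of_int \<lfloor>x / r\<rfloor> + 1) * r"
      using r by (simp_all only: pos_le_divide_eq pos_divide_less_eq)
    then show ?thesis by (simp add: I_def g_def)
  qed
  have I_ball: "I (g x) \<subseteq> ball x r" for x
    using g_mem[of x] by (auto simp: I_def ball_def dist_real_def algebra_simps)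
  define K where "K = {\<lfloor>-1 / r\<rfloor> .. \<lfloor>1 / r\<rfloor>}"
  have g_K: "x \<in> {-1..1} \<Longrightarrow> g x \<in> K" for x
    using r divide_right_mono[of "-1" x r] divide_right_mono[of x 1 r]
    by (auto simp: K_def g_def intro!: floor_mono)
  define Z where "Z = {k \<in> K. measure \<nu> (I k) = 0}"
  have "finite Z" unfolding Z_def K_def by (rule finite_subset[OF _ finite_atLeastAtMost_int]) auto
  then have "(\<Union>k\<in>Z. I k) \<in> null_sets \<nu>"
    using I_sets by (intro null_sets_UN' countable_finite)
      (auto simp: Z_def emeasure_eq_measure null_sets_def)
  then have "AE x in \<nu>. x \<notin> (\<Union>k\<in>Z. I k)" by (rule AE_not_in)
  then have cell: "AE x in \<nu>. g x \<in> K - Z"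
    using bnd by eventually_elim (use g_mem g_K in blast)
  define \<epsilon> where "\<epsilon> = Min (insert 1 ((\<lambda>k. measure \<nu> (I k)) ` (K - Z)))"
  have "\<epsilon> > 0"
    unfolding \<epsilon>_def Z_def K_def by (subst Min_gr_iff) (auto simp: zero_less_measure_iff)
  moreover have "AE x in \<nu>. \<epsilon> \<le> measure \<nu> (ball x r)"
    using cell
  proof eventually_elim
    case (elim x)
    then have "\<epsilon> \<le> measure \<nu> (I (g x))" by (simp add: \<epsilon>_def K_def)
    also have "\<dots> \<le> measure \<nu> (ball x r)"
      using I_ball by (intro finite_measure_mono) (simp_all add: S)
    finally show ?case .
  qed
  ultimately show ?thesis using that by blast
qed

lemma integrable_ln_measure_ball:
  fixes \<nu> :: "real measure"
  assumes P: "prob_space \<nu>" and S: "sets \<nu> = sets borel"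
    and bnd: "AE x in \<nu>. x \<in> {-1..1}" and "r > 0"
  shows "integrable \<nu> (\<lambda>x. ln (measure \<nu> (ball x r)))"
proof -
  interpret prob_space \<nu> by fact
  obtain \<epsilon> where \<epsilon>: "\<epsilon> > 0" "AE x in \<nu>. \<epsilon> \<le> measure \<nu> (ball x r)"
    using AE_measure_ball_ge[OF P S bnd \<open>r > 0\<close>] .
  have "AE x in \<nu>. norm (ln (measure \<nu> (ball x r))) \<le> - ln \<epsilon>"
    using \<epsilon>(2)
  proof eventually_elim
    case (elim x)
    then have "ln \<epsilon> \<le> ln (measure \<nu> (ball x r))" "ln (measure \<nu> (ball x r)) \<le> 0"
      using \<epsilon>(1) prob_le_1[of "ball x r"] by simp_all
    then show ?case by simp
  qed
  moreover have "(\<lambda>x. ln (measure \<nu> (ball x r))) \<in> borel_measurable \<nu>"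
    using measure_ball_borel_measurable[OF finite_measure_axioms S, of r]
    by (simp add: measurable_cong_sets[OF S refl])
  ultimately show ?thesis by (intro integrable_const_bound)
qed

lemma Hr_antimono:
  fixes \<nu> :: "real measure"
  assumes P: "prob_space \<nu>" and S: "sets \<nu> = sets borel"
    and bnd: "AE x in \<nu>. x \<in> {-1..1}" and "0 < r" "r \<le> r'"
  shows "Hr r' \<nu> \<le> Hr r \<nu>"
proof -
  interpret prob_space \<nu> by fact
  obtain \<epsilon> where \<epsilon>: "\<epsilon> > 0" "AE x in \<nu>. \<epsilon> \<le> measure \<nu> (ball x r)"
    using AE_measure_ball_ge[OF P S bnd \<open>0 < r\<close>] .
  have "AE x in \<nu>. ln (measure \<nu> (ball x r)) \<le> ln (measure \<nu> (ball x r'))"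
    using \<epsilon>(2)
  proof eventually_elim
    case (elim x)
    have "measure \<nu> (ball x r) \<le> measure \<nu> (ball x r')"
      using \<open>r \<le> r'\<close> by (intro finite_measure_mono subset_ball) (simp_all add: S)
    then show ?case using elim \<epsilon>(1) by simp
  qed
  then show ?thesis
    unfolding Hr_def using assms
    by (simp add: integral_mono_AE integrable_ln_measure_ball)
qed

section \<open>The stopping index \<open>n\<^sub>i\<close>\<close>

lemma (in contracting_IFS) wlen_word_unbounded:
  assumes "v \<noteq> 0"
  shows "\<exists>n. t \<le> wlen A d v (word a n)"
proof -
  let ?u = "perp_unit v"
  obtain n where n: "q ^ n < 2 powr (- t)"
    using order_tendstoD(2)[OF q_power_tendsto_0, of "2 powr (- t)"]
    by (auto simp: eventually_sequentially)
  let ?y = "transpose (Aw A (word a n)) *v ?u"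
  have "0 < norm ?y"
    using transpose_Aw_nonzero[OF inv norm_perp_unit[OF assms]] by simp
  moreover have "norm ?y < 2 powr (- t)"
    using norm_transpose_Aw_le[OF norm_perp_unit[OF assms], of "word a n"] n by simp
  ultimately have "log 2 (norm ?y) < - t"
    using log_less[of 2 "norm ?y" "2 powr (- t)"] by simp
  then have "t \<le> wlen A d v (word a n)" by (simp add: wlen_eq)
  then show ?thesis ..
qed

lemma (in contracting_IFS) wlen_word_nidx_less:
  assumes "v \<noteq> 0" and "0 < N * i"
  shows "wlen A d v (word a (nidx A d a N v i)) < real (N * i) + lambda_max A d"
proof -
  let ?P = "\<lambda>n. real (N * i) \<le> wlen A d v (word a n)"
  have "wlen A d v (word a 0) = 0"
    using norm_perp_unit[OF assms(1)] by (simp add: wlen_eq word_def transpose_mat)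
  then have "\<not> ?P 0" using assms(2) by (simp del: of_nat_mult)
  moreover have "?P (nidx A d a N v i)"
    unfolding nidx_def using wlen_word_unbounded[OF assms(1)] by (rule LeastI_ex)
  ultimately obtain m where m: "nidx A d a N v i = Suc m"
    by (cases "nidx A d a N v i") auto
  then have "\<not> ?P m"
    unfolding nidx_def by (intro not_less_Least) (simp add: nidx_def)
  moreover have "word a (nidx A d a N v i) = word a m @ [a m]"
    by (simp add: m word_def)
  ultimately show ?thesis
    using wlen_snoc_le[where A=A and d=d and w="word a m" and j="a m", OF inv assms(1)] by simp
qed

theorem lemma4p4:
  fixes A :: "'a::finite \<Rightarrow> real^2^2" and d :: "'a \<Rightarrow> real^2" and p :: "'a pmf"
    and a :: "nat \<Rightarrow> 'a" and i N :: nat and v :: "real^2"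
  assumes pos: "\<And>j r c. A j $ r $ c > 0"
    and contr: "\<And>j. onorm (\<lambda>x. A j *v x) < 1"
    and inv: "\<And>j. invertible (A j)"
    and inv_disc: "\<And>j. Tmap A d j ` unit_disc \<subseteq> unit_disc"
    and supp: "set_pmf p = UNIV"
    and i: "i \<ge> 1" and N: "N \<ge> 1"
    and v: "v \<noteq> 0"
  shows "Hr (2 powr (- real ((i + 1) * N)))
           (proj_meas A d v (uniform_measure (bernoulli p) (cylinder (word a (nidx A d a N v i)))))
         \<ge> Hr (2 powr lambda_max A d * 2 powr (- real N))
           (proj_meas A d (phiw A (word a (nidx A d a N v i)) v) (bernoulli p))"
proof -
  interpret contracting_IFS A d using contr inv inv_disc by unfold_locales
  define n where "n = nidx A d a N v i"
  define \<nu> where "\<nu> = proj_meas A d (phiw A (word a n) v) (bernoulli p)"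
  obtain \<kappa> c where \<kappa>: "\<bar>\<kappa>\<bar> = 2 powr (- wlen A d v (word a n))"
    and cyl: "proj_meas A d v (uniform_measure (bernoulli p) (cylinder (word a n))) =
              distr \<nu> borel (\<lambda>t. \<kappa> * t + c)"
    using proj_meas_cylinder[OF supp v] unfolding \<nu>_def by blast
  have "phiw A (word a n) v \<noteq> 0" using Aw_phiw[where A=A and w="word a n" and v=v, OF inv] v by auto
  then have \<nu>: "prob_space \<nu>" "sets \<nu> = sets borel" "AE x in \<nu>. x \<in> {-1..1}"
    unfolding \<nu>_def using AE_proj_meas_interval prob_space_proj_meas sets_proj_meas by blast+
  have "wlen A d v (word a n) < real (N * i) + lambda_max A d"
    unfolding n_def using i N v by (intro wlen_word_nidx_less) auto
  moreover have "2 powr (- real ((i + 1) * N)) / \<bar>\<kappa>\<bar> =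
      2 powr (wlen A d v (word a n) - real ((i + 1) * N))"
    unfolding \<kappa> by (simp add: powr_diff powr_minus_divide powr_add)
  ultimately have "2 powr (- real ((i + 1) * N)) / \<bar>\<kappa>\<bar> \<le> 2 powr (lambda_max A d + - real N)"
    by (simp add: algebra_simps)
  then have radius: "2 powr (- real ((i + 1) * N)) / \<bar>\<kappa>\<bar> \<le> 2 powr lambda_max A d * 2 powr (- real N)"
    by (simp only: powr_add)
  from radius have "Hr (2 powr lambda_max A d * 2 powr (- real N)) \<nu>
             \<le> Hr (2 powr (- real ((i + 1) * N)) / \<bar>\<kappa>\<bar>) \<nu>"
    using \<kappa> by (intro Hr_antimono[OF \<nu>]) simp_all
  also have "\<dots> = Hr (2 powr (- real ((i + 1) * N))) (distr \<nu> borel (\<lambda>t. \<kappa> * t + c))"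
    using \<kappa> by (intro Hr_affine_image[OF \<nu>(1,2), symmetric]) auto
  finally show ?thesis
    unfolding n_def[symmetric] cyl \<nu>_def .
qed

end
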